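(* Let $n=n(\theta)$ be positive integers with $n\to\infty$ and $\theta/n\to c\in(0,\infty)$ as $\theta\to\infty$. Let $K_n(\theta)$ be a random variable with $P\{K_n(\theta)=k\}=|S_n^k|\theta^k/\theta_{(n)}$, $k=1,\dots,n$, where $\theta_{(n)}=\theta(\theta+1)\cdots(\theta+n-1)$ and $|S_n^k|$ is the coefficient of $\theta^k$ in $\theta_{(n)}$. Then, as $\theta\to\infty$, the family of laws of $K_n(\theta)/n$ satisfies an LDP on $[0,1]$ with speed $\theta$ and rate function $$I(x)=\sup_{t\in\mathbb R}\{tx-\Lambda_3(t)\},$$ where $\Lambda_3(t)=\frac1c\{[c\log c-(1+c)\log(1+c)]+[(1+ce^{ct})\log(1+ce^{ct})-ce^{ct}\log(ce^{ct})]\}$.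
   Context: $K_n(\theta)$ is the number of distinct alleles in a sample of size $n$ from a $PD(\theta)$ population. An LDP with speed $\theta$ uses normalization $\theta^{-1}\log$ as $\theta\to\infty$. *)

theory Defs
  imports "HOL-Analysis.Analysis" "HOL-Combinatorics.Stirling"
begin

text \<open>Law of K_n(theta): P{K = k} = |S_n^k| theta^k / theta_(n), k = 1..n,
  with |S_n^k| the unsigned Stirling numbers of the first kind (library stirling),
  i.e. the coefficient of theta^k in the rising factorial pochhammer theta n.\<close>
definition Kprob :: "real \<Rightarrow> nat \<Rightarrow> nat \<Rightarrow> real" where
  "Kprob \<theta> n k = real (stirling n k) * \<theta> ^ k / pochhammer \<theta> n"

definition Klaw :: "real \<Rightarrow> nat \<Rightarrow> real set \<Rightarrow> real" where
  "Klaw \<theta> n A = (\<Sum>k\<in>{k\<in>{1..n}. real k / real n \<in> A}. Kprob \<theta> n k)"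

definition eln :: "real \<Rightarrow> ereal" where
  "eln p = (if p \<le> 0 then -\<infinity> else ereal (ln p))"

definition Lambda3 :: "real \<Rightarrow> real \<Rightarrow> real" where
  "Lambda3 c t = (1 / c) *
     ((c * ln c - (1 + c) * ln (1 + c)) +
      ((1 + c * exp (c * t)) * ln (1 + c * exp (c * t)) - c * exp (c * t) * ln (c * exp (c * t))))"

definition rateI :: "real \<Rightarrow> real \<Rightarrow> ereal" where
  "rateI c x = (SUP t\<in>(UNIV::real set). ereal (t * x - Lambda3 c t))"

definition LDP_01 :: "(real \<Rightarrow> real set \<Rightarrow> real) \<Rightarrow> (real \<Rightarrow> ereal) \<Rightarrow> bool" where
  "LDP_01 \<mu> I \<longleftrightarrow>
     (\<forall>x\<in>{0..1}. I x \<ge> 0) \<and>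
     (\<forall>a::real. closed {x\<in>{0..1}. I x \<le> ereal a}) \<and>
     (\<forall>F. closed F \<longrightarrow>
        Limsup at_top (\<lambda>\<theta>. ereal (1 / \<theta>) * eln (\<mu> \<theta> F)) \<le> - (INF x\<in>F \<inter> {0..1}. I x)) \<and>
     (\<forall>G. open G \<longrightarrow>
        Liminf at_top (\<lambda>\<theta>. ereal (1 / \<theta>) * eln (\<mu> \<theta> G)) \<ge> - (INF x\<in>G \<inter> {0..1}. I x))"

end

theory Submission
  imports Defs "HOL-Real_Asymp.Real_Asymp"
begin

(* Since the Stirling numbers are the coefficients of the rising factorial, the moment generating
   function of K = K_N(b) is E exp (s K) = (b e^s)_(N) / (b)_(N).  Comparing
   ln (b)_(N) = sum_j ln (b + j) with the integral of ln gives
   ln (b)_(N) / N - ln N --> (d+1) ln (d+1) - d ln d - 1 whenever b / N --> d, so that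
   ln E exp (theta t K / n) / theta --> Lambda3 t.  The upper bound follows from Chernoff bounds
   and compactness of [0,1].  For the lower bound, tilting by exp (theta t K / n) produces the law
   of K_n with theta replaced by theta e^(theta t / n); under it K / n concentrates at
   Lambda3' t = f (c e^(c t)), f u = u ln (1 + 1/u), and f maps (0, oo) onto (0, 1).  Points of
   [0,1] outside this range are approached along segments towards f c, on which the convex rate
   function, vanishing at f c, does not increase. *)

definition antideriv_ln :: "real \<Rightarrow> real" where
  "antideriv_ln x = x * ln x - x"

definition ln_poch_rate :: "real \<Rightarrow> real" where
  "ln_poch_rate d = antideriv_ln (d + 1) - antideriv_ln d"

definition mean_fraction :: "real \<Rightarrow> real" where
  "mean_fraction u = u * (ln (u + 1) - ln u)"

definition Kmgf :: "real \<Rightarrow> nat \<Rightarrow> real \<Rightarrow> real" where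
  "Kmgf b N s = pochhammer (b * exp s) N / pochhammer b N"

lemma eventually_pos_if_filterlim_at_top:
  fixes N :: "'a \<Rightarrow> nat"
  assumes "filterlim N at_top F"
  shows "eventually (\<lambda>x. N x > 0) F"
  using assms eventually_gt_at_top[of 0] by (auto simp: filterlim_iff)

lemma antideriv_ln_has_derivative:
  "x > 0 \<Longrightarrow> (antideriv_ln has_real_derivative ln x) (at x)"
  unfolding antideriv_ln_def by (auto intro!: derivative_eq_intros simp: field_simps)

lemma antideriv_ln_increment_bounds:
  assumes x: "x > 0" and h: "h \<ge> 0"
  shows "h * ln x \<le> antideriv_ln (x + h) - antideriv_ln x"
    and "antideriv_ln (x + h) - antideriv_ln x \<le> h * ln (x + h)"
proof -
  have "h * ln x \<le> antideriv_ln (x + h) - antideriv_ln x \<and>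
        antideriv_ln (x + h) - antideriv_ln x \<le> h * ln (x + h)"
  proof (cases "h = 0")
    case False
    then have "h > 0" using h by simp
    then obtain z where z: "x < z" "z < x + h"
      "antideriv_ln (x + h) - antideriv_ln x = (x + h - x) * ln z"
      using MVT2[of x "x + h" antideriv_ln ln] x antideriv_ln_has_derivative by force
    have "ln x \<le> ln z" "ln z \<le> ln (x + h)" using z x by auto
    then show ?thesis using z h by (simp add: mult_left_mono)
  qed simp
  then show "h * ln x \<le> antideriv_ln (x + h) - antideriv_ln x"
    and "antideriv_ln (x + h) - antideriv_ln x \<le> h * ln (x + h)" by auto
qed

lemma antideriv_ln_step_bounds:
  fixes N :: nat
  assumes "d > 0" "N > 0"
  shows "ln (d + real j / N) / N \<le> antideriv_ln (d + real (Suc j) / N) - antideriv_ln (d + real j / N)"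
    and "antideriv_ln (d + real (Suc j) / N) - antideriv_ln (d + real j / N) \<le> ln (d + real (Suc j) / N) / N"
proof -
  have pos: "d + real j / N > 0" using assms by (simp add: add_pos_nonneg)
  have step: "d + real (Suc j) / N = (d + real j / N) + 1 / N" by (simp add: add_divide_distrib)
  show "ln (d + real j / N) / N \<le> antideriv_ln (d + real (Suc j) / N) - antideriv_ln (d + real j / N)"
    and "antideriv_ln (d + real (Suc j) / N) - antideriv_ln (d + real j / N) \<le> ln (d + real (Suc j) / N) / N"
    using antideriv_ln_increment_bounds[OF pos, of "1 / N"] unfolding step by simp_all
qed

lemma riemann_sum_ln_le:
  fixes N :: nat
  assumes "d > 0" "N > 0"
  shows "(\<Sum>j<N. ln (d + real j / N)) / N \<le> ln_poch_rate d"
proof -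
  have "(\<Sum>j<N. ln (d + real j / N)) / N = (\<Sum>j<N. ln (d + real j / N) / N)"
    by (simp add: sum_divide_distrib)
  also have "\<dots> \<le> (\<Sum>j<N. antideriv_ln (d + real (Suc j) / N) - antideriv_ln (d + real j / N))"
    using antideriv_ln_step_bounds(1)[OF assms] by (intro sum_mono)
  also have "\<dots> = antideriv_ln (d + real N / N) - antideriv_ln (d + real 0 / N)"
    by (rule sum_lessThan_telescope)
  finally show ?thesis using assms by (simp add: ln_poch_rate_def)
qed

lemma riemann_sum_ln_ge:
  fixes N :: nat
  assumes "d > 0" "N > 0"
  shows "ln d / N + antideriv_ln (d + 1 - 1 / N) - antideriv_ln d \<le> (\<Sum>j<N. ln (d + real j / N)) / N"
proof -
  obtain M where M: "N = Suc M" using assms by (cases N) auto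
  have "antideriv_ln (d + 1 - 1 / N) - antideriv_ln d
      = (\<Sum>j<M. antideriv_ln (d + real (Suc j) / N) - antideriv_ln (d + real j / N))"
    using M by (subst sum_lessThan_telescope) (simp add: field_simps)
  also have "\<dots> \<le> (\<Sum>j<M. ln (d + real (Suc j) / N) / N)"
    using antideriv_ln_step_bounds(2)[OF assms] by (intro sum_mono)
  also have "ln d / N + \<dots> = (\<Sum>j<N. ln (d + real j / N)) / N"
    unfolding M sum.lessThan_Suc_shift by (simp add: sum_divide_distrib add_divide_distrib)
  finally show ?thesis by simp
qed

lemma ln_pochhammer_eq_riemann_sum:
  assumes N: "N > 0" and b: "b > 0"
  shows "ln (pochhammer b N) / N - ln N = (\<Sum>j<N. ln (b / N + real j / N)) / N"
proof -
  have "ln (pochhammer b N) = (\<Sum>j<N. ln (b + real j))"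
    unfolding pochhammer_prod using b
    by (subst ln_prod) (auto simp: lessThan_atLeast0 intro: add_pos_nonneg)
  also have "\<dots> = (\<Sum>j<N. ln N + ln (b / N + real j / N))"
  proof (rule sum.cong)
    fix j
    have "b + real j = real N * (b / N + real j / N)" using N by (simp add: field_simps)
    moreover have "b / N + real j / N > 0" using N b by (simp add: add_pos_nonneg)
    ultimately show "ln (b + real j) = ln N + ln (b / N + real j / N)"
      using N by (simp add: ln_mult)
  qed simp
  finally show ?thesis using N by (simp add: sum.distrib field_simps)
qed

lemma tendsto_ln_pochhammer:
  fixes N :: "'a \<Rightarrow> nat" and b :: "'a \<Rightarrow> real"
  assumes N: "filterlim N at_top F" and bN: "((\<lambda>x. b x / N x) \<longlongrightarrow> d) F" and d: "d > 0"
  shows "((\<lambda>x. ln (pochhammer (b x) (N x)) / N x - ln (N x)) \<longlongrightarrow> ln_poch_rate d) F"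
proof (rule tendsto_sandwich)
  have inv0: "((\<lambda>x. inverse (real (N x))) \<longlongrightarrow> 0) F"
    using filterlim_compose[OF filterlim_real_sequentially N]
    by (intro tendsto_inverse_0_at_top) (simp add: o_def)
  have cont: "isCont antideriv_ln x" if "x > 0" for x
    unfolding antideriv_ln_def using that by (intro continuous_intros) auto
  have "((\<lambda>x. ln (b x / N x) * inverse (real (N x)) + antideriv_ln (b x / N x + 1 - inverse (real (N x)))
      - antideriv_ln (b x / N x)) \<longlongrightarrow> ln d * 0 + antideriv_ln (d + 1 - 0) - antideriv_ln d) F"
    by (intro tendsto_intros isCont_tendsto_compose[of _ antideriv_ln, OF cont] bN inv0) (use d in auto)
  then show "((\<lambda>x. ln (b x / N x) / N x + antideriv_ln (b x / N x + 1 - 1 / N x)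
      - antideriv_ln (b x / N x)) \<longlongrightarrow> ln_poch_rate d) F"
    by (simp add: ln_poch_rate_def divide_inverse)
  show "((\<lambda>x. ln_poch_rate (b x / N x)) \<longlongrightarrow> ln_poch_rate d) F"
    unfolding ln_poch_rate_def
    by (intro tendsto_intros isCont_tendsto_compose[of _ antideriv_ln, OF cont] bN) (use d in auto)
  have ev: "eventually (\<lambda>x. N x > 0 \<and> b x > 0) F"
    using eventually_pos_if_filterlim_at_top[OF N] order_tendstoD(1)[OF bN d]
    by eventually_elim (simp add: zero_less_divide_iff)
  show "eventually (\<lambda>x. ln (b x / N x) / N x + antideriv_ln (b x / N x + 1 - 1 / N x)
      - antideriv_ln (b x / N x) \<le> ln (pochhammer (b x) (N x)) / N x - ln (N x)) F"
    using ev by eventually_elim (simp add: riemann_sum_ln_ge ln_pochhammer_eq_riemann_sum)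
  show "eventually (\<lambda>x. ln (pochhammer (b x) (N x)) / N x - ln (N x) \<le> ln_poch_rate (b x / N x)) F"
    using ev by eventually_elim (simp add: riemann_sum_ln_le ln_pochhammer_eq_riemann_sum)
qed

lemma Kmgf_pos: "b > 0 \<Longrightarrow> Kmgf b N s > 0"
  unfolding Kmgf_def by (intro divide_pos_pos pochhammer_pos) auto

lemma tendsto_ln_Kmgf:
  fixes N :: "'a \<Rightarrow> nat" and b s :: "'a \<Rightarrow> real"
  assumes N: "filterlim N at_top F" and bN: "((\<lambda>x. b x / N x) \<longlongrightarrow> d) F" and d: "d > 0"
    and s: "(s \<longlongrightarrow> \<sigma>) F"
  shows "((\<lambda>x. ln (Kmgf (b x) (N x) (s x)) / N x) \<longlongrightarrow> ln_poch_rate (d * exp \<sigma>) - ln_poch_rate d) F"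
proof -
  have rN: "((\<lambda>x. b x * exp (s x) / N x) \<longlongrightarrow> d * exp \<sigma>) F"
    using tendsto_mult[OF bN tendsto_exp[OF s]] by (simp add: field_simps)
  have "((\<lambda>x. (ln (pochhammer (b x * exp (s x)) (N x)) / N x - ln (N x))
      - (ln (pochhammer (b x) (N x)) / N x - ln (N x))) \<longlongrightarrow> ln_poch_rate (d * exp \<sigma>) - ln_poch_rate d) F"
    using d by (intro tendsto_diff tendsto_ln_pochhammer N bN rN) auto
  then show ?thesis
  proof (rule tendsto_cong[THEN iffD1, rotated])
    show "eventually (\<lambda>x. (ln (pochhammer (b x * exp (s x)) (N x)) / N x - ln (N x))
        - (ln (pochhammer (b x) (N x)) / N x - ln (N x)) = ln (Kmgf (b x) (N x) (s x)) / N x) F"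
      using order_tendstoD(1)[OF bN d]
    proof eventually_elim
      case (elim x)
      then have "b x > 0" by (simp add: zero_less_divide_iff)
      then have "pochhammer (b x) (N x) > 0" "pochhammer (b x * exp (s x)) (N x) > 0"
        by (auto intro: pochhammer_pos)
      then show ?case unfolding Kmgf_def by (simp add: ln_div diff_divide_distrib)
    qed
  qed
qed

lemma Kprob_nonneg: "b > 0 \<Longrightarrow> Kprob b N k \<ge> 0"
  unfolding Kprob_def using pochhammer_pos[of b N] by simp

lemma Kprob_mgf:
  assumes "b > 0"
  shows "(\<Sum>k\<le>N. Kprob b N k * exp (s * real k)) = Kmgf b N s"
proof -
  have "Kprob b N k * exp (s * real k) = real (stirling N k) * (b * exp s) ^ k / pochhammer b N" for k
    unfolding Kprob_def by (simp add: power_mult_distrib exp_of_nat_mult[symmetric] mult.commute)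
  then show ?thesis
    unfolding Kmgf_def by (simp add: sum_divide_distrib[symmetric] stirling_pochhammer)
qed

lemma Kprob_sum_eq_1:
  assumes "b > 0" "N > 0"
  shows "(\<Sum>k\<in>{1..N}. Kprob b N k) = 1"
proof -
  have "(\<Sum>k\<le>N. Kprob b N k) = 1"
    using Kprob_mgf[OF assms(1), of N 0] pochhammer_pos[OF assms(1), of N] by (simp add: Kmgf_def)
  moreover have "{..N} = insert 0 {1..N}" by auto
  ultimately show ?thesis using assms by (simp add: Kprob_def)
qed

lemma Kprob_chernoff:
  assumes b: "b > 0" and S: "S \<subseteq> {..N}" and v: "\<And>k. k \<in> S \<Longrightarrow> v \<le> s * real k"
  shows "sum (Kprob b N) S \<le> exp (-v) * Kmgf b N s"
proof -
  have "sum (Kprob b N) S \<le> (\<Sum>k\<in>S. exp (-v) * (Kprob b N k * exp (s * real k)))"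
  proof (rule sum_mono)
    fix k assume "k \<in> S"
    then have "1 \<le> exp (-v) * exp (s * real k)" using v by (simp add: exp_add[symmetric])
    then have "Kprob b N k * 1 \<le> Kprob b N k * (exp (-v) * exp (s * real k))"
      using Kprob_nonneg[OF b] by (intro mult_left_mono) auto
    then show "Kprob b N k \<le> exp (-v) * (Kprob b N k * exp (s * real k))" by (simp add: ac_simps)
  qed
  also have "\<dots> \<le> (\<Sum>k\<le>N. exp (-v) * (Kprob b N k * exp (s * real k)))"
    using S Kprob_nonneg[OF b] by (intro sum_mono2) auto
  also have "\<dots> = exp (-v) * Kmgf b N s"
    by (simp add: sum_distrib_left[symmetric] Kprob_mgf[OF b])
  finally show ?thesis .
qed

lemma Kprob_tilt:
  assumes "b > 0"
  shows "Kprob b N k = Kprob (b * exp s) N k * exp (- (s * real k)) * Kmgf b N s"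
proof -
  have "pochhammer (b * exp s) N > 0" using assms by (intro pochhammer_pos) auto
  then show ?thesis unfolding Kprob_def Kmgf_def
    by (simp add: power_mult_distrib exp_of_nat_mult[symmetric] exp_minus field_simps)
qed

lemma Kprob_sum_ge_tilted:
  assumes b: "b > 0" and v: "\<And>k. k \<in> S \<Longrightarrow> s * real k \<le> v"
  shows "exp (-v) * Kmgf b N s * sum (Kprob (b * exp s) N) S \<le> sum (Kprob b N) S"
proof -
  have "exp (-v) * Kmgf b N s * sum (Kprob (b * exp s) N) S
      = (\<Sum>k\<in>S. Kprob (b * exp s) N k * exp (-v) * Kmgf b N s)"
    by (simp add: sum_distrib_left ac_simps)
  also have "\<dots> \<le> (\<Sum>k\<in>S. Kprob (b * exp s) N k * exp (- (s * real k)) * Kmgf b N s)"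
    using v b less_imp_le[OF Kmgf_pos[OF b]] Kprob_nonneg[of "b * exp s"]
    by (intro sum_mono mult_right_mono mult_left_mono) auto
  also have "\<dots> = sum (Kprob b N) S"
    using Kprob_tilt[OF b] by simp
  finally show ?thesis .
qed

lemma ln_poch_rate_has_derivative:
  "u > 0 \<Longrightarrow> (ln_poch_rate has_real_derivative (ln (u + 1) - ln u)) (at u)"
  unfolding ln_poch_rate_def antideriv_ln_def
  by (auto intro!: derivative_eq_intros simp: field_simps)

lemma ln_poch_rate_exp_has_derivative:
  assumes "d > 0"
  shows "((\<lambda>\<tau>. ln_poch_rate (d * exp \<tau>)) has_real_derivative mean_fraction d) (at 0)"
proof -
  have "((\<lambda>\<tau>. d * exp \<tau>) has_real_derivative d * exp 0) (at 0)"
    by (auto intro!: derivative_eq_intros)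
  from DERIV_chain2[OF ln_poch_rate_has_derivative this] show ?thesis
    using assms by (simp add: mean_fraction_def mult.commute)
qed

lemma Lambda3_eq: "c > 0 \<Longrightarrow> Lambda3 c t = (ln_poch_rate (c * exp (c * t)) - ln_poch_rate c) / c"
  unfolding Lambda3_def ln_poch_rate_def antideriv_ln_def by (simp add: field_simps add.commute)

lemma Lambda3_0: "c > 0 \<Longrightarrow> Lambda3 c 0 = 0"
  by (simp add: Lambda3_eq)

lemma Lambda3_has_derivative:
  assumes c: "c > 0"
  shows "(Lambda3 c has_real_derivative mean_fraction (c * exp (c * t))) (at t)"
proof -
  have "((\<lambda>t. (ln_poch_rate (c * exp (c * t)) - ln_poch_rate c) / c) has_real_derivative
      (ln (c * exp (c * t) + 1) - ln (c * exp (c * t))) * (c * (exp (c * t) * c)) / c) (at t)"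
    using c by (auto intro!: derivative_eq_intros DERIV_chain2[OF ln_poch_rate_has_derivative])
  moreover have "Lambda3 c = (\<lambda>t. (ln_poch_rate (c * exp (c * t)) - ln_poch_rate c) / c)"
    using Lambda3_eq[OF c] by (simp add: fun_eq_iff)
  ultimately show ?thesis
    using c by (simp add: mean_fraction_def ac_simps)
qed

lemma mean_fraction_pos: "u > 0 \<Longrightarrow> 0 < mean_fraction u"
  unfolding mean_fraction_def by simp

lemma mean_fraction_less_1:
  assumes "u > 0"
  shows "mean_fraction u < 1"
proof -
  have "1 + 1 / u = (u + 1) / u" using assms by (simp add: field_simps)
  then have "ln (u + 1) - ln u = ln (1 + 1 / u)" using assms by (simp add: ln_div)
  also have "\<dots> < 1 / u" using ln_add_one_self_less_self[of "1 / u"] assms by simp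
  finally show ?thesis unfolding mean_fraction_def using assms by (simp add: field_simps)
qed

lemma mean_fraction_mono:
  assumes "0 < u" "u \<le> v"
  shows "mean_fraction u \<le> mean_fraction v"
proof (rule DERIV_nonneg_imp_nondecreasing[OF assms(2)])
  fix x assume x: "u \<le> x" "x \<le> v"
  then have "x > 0" using assms by simp
  have "ln (x / (x + 1)) \<le> x / (x + 1) - 1"
    using \<open>x > 0\<close> by (intro ln_le_minus_one) auto
  then have "0 \<le> ln (x + 1) - ln x - 1 / (x + 1)"
    using \<open>x > 0\<close> by (simp add: ln_div field_simps)
  moreover have "(mean_fraction has_real_derivative (ln (x + 1) - ln x - 1 / (x + 1))) (at x)"
    unfolding mean_fraction_def using \<open>x > 0\<close> by (auto intro!: derivative_eq_intros simp: field_simps)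
  ultimately show "\<exists>y. (mean_fraction has_real_derivative y) (at x) \<and> 0 \<le> y" by blast
qed

lemma mean_fraction_surj:
  assumes y: "0 < y" "y < 1"
  obtains u where "u > 0" "mean_fraction u = y"
proof -
  have "(mean_fraction \<longlongrightarrow> 0) (at_right 0)" unfolding mean_fraction_def by real_asymp
  then have "eventually (\<lambda>u. mean_fraction u < y \<and> u > 0) (at_right 0)"
    using eventually_conj[OF order_tendstoD(2) eventually_at_right_less] y(1) by blast
  then obtain u1 where u1: "u1 > 0" "mean_fraction u1 < y"
    using eventually_happens'[OF trivial_limit_at_right_real] by blast
  have "(mean_fraction \<longlongrightarrow> 1) at_top" unfolding mean_fraction_def by real_asymp
  then have "eventually (\<lambda>u. mean_fraction u > y \<and> u \<ge> u1) at_top"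
    using eventually_conj[OF order_tendstoD(1) eventually_ge_at_top] y(2) by blast
  then obtain u2 where u2: "u2 \<ge> u1" "mean_fraction u2 > y"
    using eventually_happens'[OF trivial_limit_at_top_linorder] by blast
  have "continuous_on {u1..u2} mean_fraction"
    unfolding mean_fraction_def using u1 by (intro continuous_intros) auto
  then obtain u where "u1 \<le> u" "mean_fraction u = y"
    using IVT'[of mean_fraction u1 y u2] u1 u2 by auto
  then show ?thesis using u1 by (intro that[of u]) auto
qed

(* Lambda3 c is convex, its derivative mean_fraction (c * exp (c * t)) being increasing in t. *)
lemma Lambda3_ge_tangent:
  assumes c: "c > 0"
  shows "t * mean_fraction c \<le> Lambda3 c t"
proof -
  define g where "g t = Lambda3 c t - t * mean_fraction c" for t
  have g': "(g has_real_derivative (mean_fraction (c * exp (c * s)) - mean_fraction c)) (at s)" for s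
    unfolding g_def by (auto intro!: derivative_eq_intros Lambda3_has_derivative[OF c])
  have up: "mean_fraction c \<le> mean_fraction (c * exp (c * s))" if "s \<ge> 0" for s
    using c that by (intro mean_fraction_mono) auto
  have down: "mean_fraction (c * exp (c * s)) \<le> mean_fraction c" if "s \<le> 0" for s
    using c that by (intro mean_fraction_mono) (auto simp: mult_nonneg_nonpos)
  have "g 0 \<le> g t"
  proof (cases "t \<ge> 0")
    case True
    show ?thesis
      by (rule DERIV_nonneg_imp_nondecreasing[OF True]) (use g' up in force)
  next
    case False
    show ?thesis
      by (rule DERIV_nonpos_imp_nonincreasing[of t 0]) (use g' down False in force)+
  qed
  then show ?thesis using Lambda3_0[OF c] unfolding g_def by simp
qed

lemma rateI_ge: "ereal (t * x - Lambda3 c t) \<le> rateI c x"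
  unfolding rateI_def by (rule SUP_upper) auto

lemma rateI_nonneg: "c > 0 \<Longrightarrow> 0 \<le> rateI c x"
  using rateI_ge[of 0 x c] by (simp add: Lambda3_0 zero_ereal_def)

lemma rateI_mean_fraction: "c > 0 \<Longrightarrow> rateI c (mean_fraction c) = 0"
  using rateI_nonneg[of c "mean_fraction c"] Lambda3_ge_tangent[of c]
  unfolding rateI_def by (intro antisym SUP_least) (auto simp: zero_ereal_def)

lemma closed_rateI_sublevel: "closed {x\<in>{0..1}. rateI c x \<le> ereal a}"
proof -
  have "{x\<in>{0..1}. rateI c x \<le> ereal a} = {0..1} \<inter> (\<Inter>t. {x. t * x - Lambda3 c t \<le> a})"
    unfolding rateI_def by (auto simp: SUP_le_iff)
  then show ?thesis
    by (simp only:) (intro closed_Int closed_INT ballI closed_Collect_le continuous_intros closed_atLeastAtMost)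
qed

lemma rateI_segment_to_mean_fraction_le:
  assumes c: "c > 0" and l: "0 \<le> l" "l \<le> 1" and x: "rateI c x \<le> ereal r"
  shows "rateI c ((1 - l) * x + l * mean_fraction c) \<le> ereal ((1 - l) * r)"
  unfolding rateI_def
proof (rule SUP_least)
  fix t
  have "t * x - Lambda3 c t \<le> r"
    using order_trans[OF rateI_ge x] by simp
  moreover have "t * mean_fraction c - Lambda3 c t \<le> 0"
    using rateI_ge[of t "mean_fraction c" c] rateI_mean_fraction[OF c] by (simp add: zero_ereal_def)
  ultimately have "(1 - l) * (t * x - Lambda3 c t) \<le> (1 - l) * r"
    and "l * (t * mean_fraction c - Lambda3 c t) \<le> 0"
    using l by (auto intro: mult_left_mono mult_nonneg_nonpos)
  then show "ereal (t * ((1 - l) * x + l * mean_fraction c) - Lambda3 c t) \<le> ereal ((1 - l) * r)"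
    by (simp add: algebra_simps)
qed

lemma rateI_approx_by_interior:
  assumes c: "c > 0" and G: "open G" "x \<in> G" and x: "x \<in> {0..1}" and r: "rateI c x \<le> ereal r"
  obtains y where "y \<in> G" "0 < y" "y < 1" "rateI c y \<le> ereal r"
proof -
  define y0 where "y0 = mean_fraction c"
  have y0: "0 < y0" "y0 < 1" unfolding y0_def using c mean_fraction_pos mean_fraction_less_1 by auto
  have "((\<lambda>l. (1 - l) * x + l * y0) \<longlongrightarrow> (1 - 0) * x + 0 * y0) (at_right 0)"
    by (intro tendsto_intros)
  then have "eventually (\<lambda>l. (1 - l) * x + l * y0 \<in> G) (at_right 0)"
    using G by (intro topological_tendstoD) auto
  moreover have "eventually (\<lambda>l. 0 < l \<and> l < (1::real)) (at_right 0)"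
    using eventually_at_right_real[of 0 "1::real"] by simp
  ultimately obtain l where l: "(1 - l) * x + l * y0 \<in> G" "0 < l" "l < 1"
    using eventually_happens'[OF trivial_limit_at_right_real] eventually_conj by blast
  have "0 \<le> r" using order_trans[OF rateI_nonneg[OF c, of x] r] by (simp add: zero_ereal_def)
  then have "rateI c ((1 - l) * x + l * y0) \<le> ereal r"
    using rateI_segment_to_mean_fraction_le[OF c _ _ r, of l] l
    unfolding y0_def by (auto intro: order_trans simp: mult_left_le_one_le)
  moreover have "0 \<le> (1 - l) * x" "(1 - l) * x \<le> 1 - l" "0 < l * y0" "l * y0 < l"
    using x l y0 by (auto intro: mult_left_le)
  then have "0 < (1 - l) * x + l * y0" "(1 - l) * x + l * y0 < 1"
    by linarith+
  ultimately show ?thesis using that l(1) by blast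
qed

lemma rateI_finite_cover:
  assumes "compact C" and less: "\<And>x. x \<in> C \<Longrightarrow> ereal L < rateI c x"
  obtains T where "finite T" "\<forall>x\<in>C. \<exists>t\<in>T. L < t * x - Lambda3 c t"
proof -
  have "open {x. L < t * x - Lambda3 c t}" for t
    by (intro open_Collect_less continuous_intros)
  moreover have "C \<subseteq> (\<Union>t\<in>UNIV. {x. L < t * x - Lambda3 c t})"
    using less unfolding rateI_def less_SUP_iff by auto
  ultimately obtain T where "finite T" "C \<subseteq> (\<Union>t\<in>T. {x. L < t * x - Lambda3 c t})"
    by (rule compactE_image[OF \<open>compact C\<close>])
  then show ?thesis using that by blast
qed

lemma ln_poch_rate_exp_below_secants:
  assumes d: "d > 0" and \<rho>: "\<rho> > 0"
  shows "\<exists>\<tau>>0. ln_poch_rate (d * exp \<tau>) - ln_poch_rate d < \<tau> * (mean_fraction d + \<rho>)"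
    and "\<exists>\<tau><0. ln_poch_rate (d * exp \<tau>) - ln_poch_rate d < \<tau> * (mean_fraction d - \<rho>)"
proof -
  have "((\<lambda>z. (ln_poch_rate (d * exp z) - ln_poch_rate (d * exp 0)) / (z - 0)) \<longlongrightarrow> mean_fraction d) (at 0)"
    using ln_poch_rate_exp_has_derivative[OF d] unfolding has_field_derivative_iff .
  from tendstoD[OF this \<rho>]
  have "eventually (\<lambda>z. \<bar>(ln_poch_rate (d * exp z) - ln_poch_rate d) / z - mean_fraction d\<bar> < \<rho>) (at 0)"
    by (simp add: dist_real_def)
  then obtain e where e: "e > 0"
    "\<And>z. z \<noteq> 0 \<Longrightarrow> \<bar>z\<bar> < e \<Longrightarrow> \<bar>(ln_poch_rate (d * exp z) - ln_poch_rate d) / z - mean_fraction d\<bar> < \<rho>"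
    unfolding eventually_at by (auto simp: dist_real_def)
  have "(ln_poch_rate (d * exp (e/2)) - ln_poch_rate d) / (e/2) < mean_fraction d + \<rho>"
    using e(2)[of "e/2"] e(1) by (simp add: abs_less_iff)
  then show "\<exists>\<tau>>0. ln_poch_rate (d * exp \<tau>) - ln_poch_rate d < \<tau> * (mean_fraction d + \<rho>)"
    using e(1) by (intro exI[of _ "e/2"]) (simp add: field_simps)
  have "mean_fraction d - \<rho> < (ln_poch_rate (d * exp (-e/2)) - ln_poch_rate d) / (-e/2)"
    using e(2)[of "-e/2"] e(1) by (simp add: abs_less_iff)
  then show "\<exists>\<tau><0. ln_poch_rate (d * exp \<tau>) - ln_poch_rate d < \<tau> * (mean_fraction d - \<rho>)"
    using e(1) by (intro exI[of _ "-e/2"]) (simp add: field_simps)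
qed

lemma eventually_Kprob_tail_less:
  fixes N :: "'a \<Rightarrow> nat" and a :: "'a \<Rightarrow> real"
  assumes N: "filterlim N at_top F" and aN: "((\<lambda>x. a x / N x) \<longlongrightarrow> d) F" and d: "d > 0"
    and \<tau>: "ln_poch_rate (d * exp \<tau>) - ln_poch_rate d < \<tau> * z"
    and S: "\<And>x. S x \<subseteq> {..N x}" and Sk: "\<And>x k. k \<in> S x \<Longrightarrow> \<tau> * (real (N x) * z) \<le> \<tau> * real k"
    and \<epsilon>: "\<epsilon> > 0"
  shows "eventually (\<lambda>x. sum (Kprob (a x) (N x)) (S x) < \<epsilon>) F"
proof -
  define h where "h = (ln_poch_rate (d * exp \<tau>) - ln_poch_rate d - \<tau> * z) / 2"
  have h: "h < 0" using \<tau> unfolding h_def by simp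
  have "eventually (\<lambda>x. ln (Kmgf (a x) (N x) \<tau>) / N x < \<tau> * z + h) F"
    using tendsto_ln_Kmgf[OF N aN d tendsto_const] \<tau>
    by (intro order_tendstoD(2)) (auto simp: h_def field_simps)
  moreover have "eventually (\<lambda>x. exp (h * real (N x)) < \<epsilon>) F"
  proof -
    have "filterlim (\<lambda>x. h * real (N x)) at_bot F"
      using h filterlim_compose[OF filterlim_real_sequentially N]
      by (intro filterlim_tendsto_neg_mult_at_bot[OF tendsto_const]) (auto simp: o_def)
    then have "((\<lambda>x. exp (h * real (N x))) \<longlongrightarrow> 0) F"
      using filterlim_compose[OF exp_at_bot] by blast
    then show ?thesis using order_tendstoD(2) \<epsilon> by blast
  qed
  ultimately show ?thesis
    using eventually_pos_if_filterlim_at_top[OF N] order_tendstoD(1)[OF aN d]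
  proof eventually_elim
    case (elim x)
    then have ap: "a x > 0" by (simp add: zero_less_divide_iff)
    have "ln (Kmgf (a x) (N x) \<tau>) < (\<tau> * z + h) * N x"
      using elim(1,3) by (simp add: field_simps)
    then have "exp (ln (Kmgf (a x) (N x) \<tau>)) < exp ((\<tau> * z + h) * N x)" by simp
    then have "Kmgf (a x) (N x) \<tau> < exp ((\<tau> * z + h) * N x)"
      using Kmgf_pos[OF ap] by simp
    have "sum (Kprob (a x) (N x)) (S x) \<le> exp (- (\<tau> * (real (N x) * z))) * Kmgf (a x) (N x) \<tau>"
      by (rule Kprob_chernoff[OF ap S Sk])
    also have "\<dots> < exp (- (\<tau> * (real (N x) * z))) * exp ((\<tau> * z + h) * N x)"
      using \<open>Kmgf (a x) (N x) \<tau> < _\<close> by simp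
    also have "\<dots> = exp (h * real (N x))" by (simp add: exp_add[symmetric] algebra_simps)
    finally show ?case using elim(2) by simp
  qed
qed

(* Law of large numbers: mean_fraction d is the derivative at 0 of the limit of the
   log moment generating function of K_N / N, so both Chernoff tails decay exponentially. *)
lemma eventually_Kprob_near_mean:
  fixes N :: "'a \<Rightarrow> nat" and a :: "'a \<Rightarrow> real"
  assumes N: "filterlim N at_top F" and aN: "((\<lambda>x. a x / N x) \<longlongrightarrow> d) F" and d: "d > 0" and \<rho>: "\<rho> > 0"
  shows "eventually (\<lambda>x. 1/2 \<le> sum (Kprob (a x) (N x)) {k\<in>{1..N x}. \<bar>real k / N x - mean_fraction d\<bar> < \<rho>}) F"
proof -
  obtain \<tau>1 where \<tau>1: "\<tau>1 > 0" "ln_poch_rate (d * exp \<tau>1) - ln_poch_rate d < \<tau>1 * (mean_fraction d + \<rho>)"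
    using ln_poch_rate_exp_below_secants(1)[OF d \<rho>] by blast
  obtain \<tau>2 where \<tau>2: "\<tau>2 < 0" "ln_poch_rate (d * exp \<tau>2) - ln_poch_rate d < \<tau>2 * (mean_fraction d - \<rho>)"
    using ln_poch_rate_exp_below_secants(2)[OF d \<rho>] by blast
  define B U L where
    "B x = {k\<in>{1..N x}. \<bar>real k / N x - mean_fraction d\<bar> < \<rho>}" and
    "U x = {k\<in>{1..N x}. mean_fraction d + \<rho> \<le> real k / N x}" and
    "L x = {k\<in>{1..N x}. real k / N x \<le> mean_fraction d - \<rho>}" for x
  have "eventually (\<lambda>x. sum (Kprob (a x) (N x)) (U x) < 1/4) F"
  proof (rule eventually_Kprob_tail_less[OF N aN d \<tau>1(2)])
    fix x k assume "k \<in> U x"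
    then have "real (N x) * (mean_fraction d + \<rho>) \<le> real k"
      by (auto simp: U_def field_simps)
    then show "\<tau>1 * (real (N x) * (mean_fraction d + \<rho>)) \<le> \<tau>1 * real k"
      using \<tau>1(1) by (intro mult_left_mono) auto
  qed (auto simp: U_def)
  moreover have "eventually (\<lambda>x. sum (Kprob (a x) (N x)) (L x) < 1/4) F"
  proof (rule eventually_Kprob_tail_less[OF N aN d \<tau>2(2)])
    fix x k assume "k \<in> L x"
    then have "real k \<le> real (N x) * (mean_fraction d - \<rho>)"
      by (auto simp: L_def field_simps)
    then show "\<tau>2 * (real (N x) * (mean_fraction d - \<rho>)) \<le> \<tau>2 * real k"
      using \<tau>2(1) by (intro mult_left_mono_neg) auto
  qed (auto simp: L_def)
  ultimately have "eventually (\<lambda>x. 1/2 \<le> sum (Kprob (a x) (N x)) (B x)) F"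
    using eventually_pos_if_filterlim_at_top[OF N] order_tendstoD(1)[OF aN d]
  proof eventually_elim
    case (elim x)
    then have ap: "a x > 0" by (simp add: zero_less_divide_iff)
    let ?P = "sum (Kprob (a x) (N x))"
    have "{1..N x} - B x = U x \<union> L x" "U x \<inter> L x = {}" "B x \<subseteq> {1..N x}"
      using \<rho> by (auto simp: B_def U_def L_def)
    moreover have "finite (U x)" "finite (L x)" by (simp_all add: U_def L_def)
    ultimately have "?P {1..N x} = ?P (B x) + (?P (U x) + ?P (L x))"
      using sum.subset_diff[of "B x" "{1..N x}" "Kprob (a x) (N x)"]
        sum.union_disjoint[of "U x" "L x" "Kprob (a x) (N x)"] by simp
    then have "1 = ?P (B x) + (?P (U x) + ?P (L x))"
      using Kprob_sum_eq_1[OF ap elim(3)] by simp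
    then show ?case using elim(1,2) by simp
  qed
  then show ?thesis unfolding B_def .
qed

lemma sum_le_sum_over_cover:
  fixes g :: "'a \<Rightarrow> real"
  assumes "finite A" "finite I" "\<And>x. x \<in> A \<Longrightarrow> g x \<ge> 0" "\<And>x. x \<in> A \<Longrightarrow> \<exists>i\<in>I. P i x"
  shows "sum g A \<le> (\<Sum>i\<in>I. sum g {x\<in>A. P i x})"
proof -
  have "sum g A \<le> (\<Sum>x\<in>A. \<Sum>i\<in>I. if P i x then g x else 0)"
  proof (rule sum_mono)
    fix x assume x: "x \<in> A"
    then obtain i where i: "i \<in> I" "P i x" using assms(4) by blast
    have "(if P i x then g x else 0) \<le> (\<Sum>i\<in>I. if P i x then g x else 0)"
      using assms(2,3) x i by (intro member_le_sum) auto
    then show "g x \<le> (\<Sum>i\<in>I. if P i x then g x else 0)" using i by simp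
  qed
  also have "\<dots> = (\<Sum>i\<in>I. sum g {x\<in>A. P i x})"
    using assms(1) by (subst sum.swap) (simp add: sum.inter_filter)
  finally show ?thesis .
qed

lemma Limsup_le_uminus_if_eventually:
  fixes g :: "'a \<Rightarrow> ereal"
  assumes "\<And>L. ereal L < m \<Longrightarrow> eventually (\<lambda>x. g x \<le> ereal (- L)) F"
  shows "Limsup F g \<le> - m"
proof (rule ccontr)
  assume "\<not> Limsup F g \<le> - m"
  then have "- Limsup F g < m" by (simp add: ereal_uminus_less_reorder not_le)
  then obtain L where L: "- Limsup F g < ereal L" "ereal L < m" using ereal_dense2 by blast
  have "Limsup F g \<le> ereal (- L)" by (rule Limsup_bounded[OF assms[OF L(2)]])
  then show False using L(1) by (simp add: ereal_uminus_less_reorder)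
qed

lemma le_Liminf_if_eventually_ge:
  fixes g :: "'a \<Rightarrow> ereal"
  assumes "\<And>\<epsilon>. \<epsilon> > 0 \<Longrightarrow> eventually (\<lambda>x. ereal (a - \<epsilon>) \<le> g x) F"
  shows "ereal a \<le> Liminf F g"
proof (rule dense_le)
  fix z assume z: "z < ereal a"
  show "z \<le> Liminf F g"
  proof (cases z)
    case (real w)
    then show ?thesis using z assms[of "a - w"] by (auto intro: Liminf_bounded)
  qed (use z in auto)
qed

locale ewens_ldp_regime =
  fixes n :: "real \<Rightarrow> nat" and c :: real
  assumes n_pos: "\<And>\<theta>. n \<theta> > 0"
    and n_at_top: "filterlim n at_top at_top"
    and theta_over_n: "((\<lambda>\<theta>. \<theta> / real (n \<theta>)) \<longlongrightarrow> c) at_top"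
    and c_pos: "c > 0"
begin

abbreviation scaled_log_Klaw :: "real \<Rightarrow> real set \<Rightarrow> ereal" where
  "scaled_log_Klaw \<theta> A \<equiv> ereal (1 / \<theta>) * eln (Klaw \<theta> (n \<theta>) A)"

lemma tendsto_scaled_ln_Kmgf:
  "((\<lambda>\<theta>. ln (Kmgf \<theta> (n \<theta>) (\<theta> / n \<theta> * t)) / \<theta>) \<longlongrightarrow> Lambda3 c t) at_top"
proof -
  have "((\<lambda>\<theta>. ln (Kmgf \<theta> (n \<theta>) (\<theta> / n \<theta> * t)) / n \<theta> * inverse (\<theta> / n \<theta>))
      \<longlongrightarrow> (ln_poch_rate (c * exp (c * t)) - ln_poch_rate c) * inverse c) at_top"
    using c_pos by (intro tendsto_intros tendsto_ln_Kmgf n_at_top theta_over_n) auto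
  moreover have "(\<lambda>\<theta>. ln (Kmgf \<theta> (n \<theta>) (\<theta> / n \<theta> * t)) / n \<theta> * inverse (\<theta> / n \<theta>))
      = (\<lambda>\<theta>. ln (Kmgf \<theta> (n \<theta>) (\<theta> / n \<theta> * t)) / \<theta>)"
    using n_pos by (simp add: fun_eq_iff inverse_divide)
  moreover have "(ln_poch_rate (c * exp (c * t)) - ln_poch_rate c) * inverse c = Lambda3 c t"
    using Lambda3_eq[OF c_pos] by (simp add: divide_inverse)
  ultimately show ?thesis by simp
qed

lemma Klaw_le_by_cover:
  assumes \<theta>: "\<theta> > 0" and T: "finite T"
    and cover: "\<And>k. k \<in> {1..n \<theta>} \<Longrightarrow> real k / n \<theta> \<in> F \<Longrightarrow> \<exists>t\<in>T. L < t * (real k / n \<theta>) - Lambda3 c t"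
    and mgf: "\<And>t. t \<in> T \<Longrightarrow> ln (Kmgf \<theta> (n \<theta>) (\<theta> / n \<theta> * t)) / \<theta> \<le> Lambda3 c t + \<delta>"
  shows "Klaw \<theta> (n \<theta>) F \<le> real (card T) * exp (\<theta> * (\<delta> - L))"
proof -
  let ?S = "{k\<in>{1..n \<theta>}. real k / n \<theta> \<in> F}"
  have "Klaw \<theta> (n \<theta>) F \<le> (\<Sum>t\<in>T. sum (Kprob \<theta> (n \<theta>)) {k\<in>?S. L < t * (real k / n \<theta>) - Lambda3 c t})"
    unfolding Klaw_def using T cover Kprob_nonneg[OF \<theta>] by (intro sum_le_sum_over_cover) auto
  also have "\<dots> \<le> (\<Sum>t\<in>T. exp (\<theta> * (\<delta> - L)))"
  proof (rule sum_mono)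
    fix t assume t: "t \<in> T"
    have "sum (Kprob \<theta> (n \<theta>)) {k\<in>?S. L < t * (real k / n \<theta>) - Lambda3 c t}
        \<le> exp (- (\<theta> * (Lambda3 c t + L))) * Kmgf \<theta> (n \<theta>) (\<theta> / n \<theta> * t)"
    proof (rule Kprob_chernoff[OF \<theta>])
      fix k assume "k \<in> {k\<in>?S. L < t * (real k / n \<theta>) - Lambda3 c t}"
      then have "\<theta> * (Lambda3 c t + L) \<le> \<theta> * (t * (real k / n \<theta>))"
        using \<theta> by (intro mult_left_mono) auto
      then show "\<theta> * (Lambda3 c t + L) \<le> \<theta> / n \<theta> * t * real k" by simp
    qed auto
    also have "\<dots> \<le> exp (- (\<theta> * (Lambda3 c t + L))) * exp (\<theta> * (Lambda3 c t + \<delta>))"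
    proof (rule mult_left_mono)
      have "ln (Kmgf \<theta> (n \<theta>) (\<theta> / n \<theta> * t)) \<le> \<theta> * (Lambda3 c t + \<delta>)"
        using mgf[OF t] \<theta> by (simp add: field_simps)
      then show "Kmgf \<theta> (n \<theta>) (\<theta> / n \<theta> * t) \<le> exp (\<theta> * (Lambda3 c t + \<delta>))"
        using ln_le_cancel_iff[OF Kmgf_pos[OF \<theta>] exp_gt_zero] by simp
    qed simp
    also have "\<dots> = exp (\<theta> * (\<delta> - L))" by (simp add: exp_add[symmetric] algebra_simps)
    finally show "sum (Kprob \<theta> (n \<theta>)) {k\<in>?S. L < t * (real k / n \<theta>) - Lambda3 c t} \<le> exp (\<theta> * (\<delta> - L))" .
  qed
  finally show ?thesis by simp
qed

lemma eventually_scaled_log_Klaw_le: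
  assumes F: "closed F" and L: "ereal L < (INF x\<in>F \<inter> {0..1}. rateI c x)"
  shows "eventually (\<lambda>\<theta>. scaled_log_Klaw \<theta> F \<le> ereal (- L)) at_top"
proof -
  obtain L' where L': "ereal L < ereal L'" "ereal L' < (INF x\<in>F \<inter> {0..1}. rateI c x)"
    using ereal_dense2[OF L] by blast
  define \<delta> where "\<delta> = (L' - L) / 2"
  have \<delta>: "\<delta> > 0" using L' unfolding \<delta>_def by simp
  have "compact (F \<inter> {0..1})" by (intro closed_Int_compact F compact_Icc)
  moreover have "ereal L' < rateI c x" if "x \<in> F \<inter> {0..1}" for x
    using L'(2) INF_lower[OF that, of "rateI c"] by simp
  ultimately obtain T where T: "finite T" "\<forall>x\<in>F \<inter> {0..1}. \<exists>t\<in>T. L' < t * x - Lambda3 c t"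
    by (rule rateI_finite_cover)
  have "eventually (\<lambda>\<theta>. \<forall>t\<in>T. ln (Kmgf \<theta> (n \<theta>) (\<theta> / n \<theta> * t)) / \<theta> < Lambda3 c t + \<delta>) at_top"
    using \<delta> by (intro eventually_ball_finite T ballI order_tendstoD(2)[OF tendsto_scaled_ln_Kmgf]) auto
  moreover have "((\<lambda>\<theta>. ln (real (card T) + 1) * inverse \<theta>) \<longlongrightarrow> ln (real (card T) + 1) * 0) at_top"
    by (intro tendsto_intros tendsto_inverse_0_at_top filterlim_ident)
  then have "eventually (\<lambda>\<theta>. ln (real (card T) + 1) * inverse \<theta> < \<delta>) at_top"
    using \<delta> by (intro order_tendstoD(2)) auto
  ultimately show ?thesis using eventually_gt_at_top[of 0]
  proof eventually_elim
    case (elim \<theta>)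
    then have \<theta>: "\<theta> > 0" by simp
    have "Klaw \<theta> (n \<theta>) F \<le> real (card T) * exp (\<theta> * (\<delta> - L'))"
    proof (rule Klaw_le_by_cover[OF \<theta> T(1)])
      fix k assume "k \<in> {1..n \<theta>}" "real k / n \<theta> \<in> F"
      then have "real k / n \<theta> \<in> F \<inter> {0..1}" by auto
      then show "\<exists>t\<in>T. L' < t * (real k / n \<theta>) - Lambda3 c t" using T(2) by blast
    qed (use elim(1) in auto)
    also have "\<dots> \<le> (real (card T) + 1) * exp (\<theta> * (\<delta> - L'))" by simp
    finally have K: "Klaw \<theta> (n \<theta>) F \<le> (real (card T) + 1) * exp (\<theta> * (\<delta> - L'))" .
    show ?case
    proof (cases "Klaw \<theta> (n \<theta>) F > 0")
      case True
      have "ln (Klaw \<theta> (n \<theta>) F) \<le> ln ((real (card T) + 1) * exp (\<theta> * (\<delta> - L')))"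
        using K True by simp
      also have "\<dots> = ln (real (card T) + 1) + \<theta> * (\<delta> - L')" by (simp add: ln_mult)
      finally have "ln (Klaw \<theta> (n \<theta>) F) \<le> ln (real (card T) + 1) + \<theta> * (\<delta> - L')" .
      then have "ln (Klaw \<theta> (n \<theta>) F) / \<theta> \<le> ln (real (card T) + 1) * inverse \<theta> + (\<delta> - L')"
        using \<theta> by (simp add: field_simps)
      also have "\<dots> \<le> - L" using elim(2) unfolding \<delta>_def by argo
      finally show ?thesis using True \<theta> by (simp add: eln_def)
    qed (use \<theta> in \<open>simp add: eln_def\<close>)
  qed
qed

lemma upper_bound:
  assumes "closed F"
  shows "Limsup at_top (\<lambda>\<theta>. scaled_log_Klaw \<theta> F) \<le> - (INF x\<in>F \<inter> {0..1}. rateI c x)"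
  using eventually_scaled_log_Klaw_le[OF assms] by (rule Limsup_le_uminus_if_eventually)

lemma eventually_ln_Kprob_near_mean_ge:
  fixes t :: real
  assumes \<rho>: "\<rho> > 0" and \<epsilon>: "\<epsilon> > 0"
  defines "y \<equiv> mean_fraction (c * exp (c * t))"
  defines "B \<equiv> \<lambda>\<theta>. {k\<in>{1..n \<theta>}. \<bar>real k / n \<theta> - y\<bar> < \<rho>}"
  shows "eventually (\<lambda>\<theta>. 0 < sum (Kprob \<theta> (n \<theta>)) (B \<theta>) \<and>
    Lambda3 c t - t * y - \<bar>t\<bar> * \<rho> - \<epsilon> \<le> ln (sum (Kprob \<theta> (n \<theta>)) (B \<theta>)) / \<theta>) at_top"
proof -
  have "((\<lambda>\<theta>. \<theta> / n \<theta> * exp (\<theta> / n \<theta> * t)) \<longlongrightarrow> c * exp (c * t)) at_top"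
    by (intro tendsto_intros theta_over_n)
  then have "((\<lambda>\<theta>. \<theta> * exp (\<theta> / n \<theta> * t) / n \<theta>) \<longlongrightarrow> c * exp (c * t)) at_top"
    by (simp add: field_simps)
  from eventually_Kprob_near_mean[OF n_at_top this _ \<rho>]
  have "eventually (\<lambda>\<theta>. 1/2 \<le> sum (Kprob (\<theta> * exp (\<theta> / n \<theta> * t)) (n \<theta>)) (B \<theta>)) at_top"
    using c_pos unfolding B_def y_def by simp
  moreover have "eventually (\<lambda>\<theta>. Lambda3 c t - \<epsilon>/2 < ln (Kmgf \<theta> (n \<theta>) (\<theta> / n \<theta> * t)) / \<theta>) at_top"
    using \<epsilon> by (intro order_tendstoD(1)[OF tendsto_scaled_ln_Kmgf]) auto
  moreover have "((\<lambda>\<theta>. ln (1/2::real) * inverse \<theta>) \<longlongrightarrow> ln (1/2) * 0) at_top"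
    by (intro tendsto_intros tendsto_inverse_0_at_top filterlim_ident)
  then have "eventually (\<lambda>\<theta>. - \<epsilon>/2 < ln (1/2) * inverse \<theta>) at_top"
    using \<epsilon> by (intro order_tendstoD(1)) auto
  ultimately show ?thesis using eventually_gt_at_top[of 0]
  proof eventually_elim
    case (elim \<theta>)
    then have \<theta>: "\<theta> > 0" by simp
    define M where "M = Kmgf \<theta> (n \<theta>) (\<theta> / n \<theta> * t)"
    define v where "v = \<theta> * (t * y + \<bar>t\<bar> * \<rho>)"
    have M: "M > 0" unfolding M_def by (rule Kmgf_pos[OF \<theta>])
    have "exp (-v) * M * sum (Kprob (\<theta> * exp (\<theta> / n \<theta> * t)) (n \<theta>)) (B \<theta>) \<le> sum (Kprob \<theta> (n \<theta>)) (B \<theta>)"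
      unfolding M_def
    proof (rule Kprob_sum_ge_tilted[OF \<theta>])
      fix k assume "k \<in> B \<theta>"
      then have "t * (real k / n \<theta> - y) \<le> \<bar>t\<bar> * \<rho>"
        unfolding B_def by (auto intro: order_trans[OF abs_ge_self] simp: abs_mult mult_left_mono)
      then have "\<theta> * (t * (real k / n \<theta>)) \<le> v"
        unfolding v_def using \<theta> by (intro mult_left_mono) (auto simp: algebra_simps)
      then show "\<theta> / n \<theta> * t * real k \<le> v" by simp
    qed
    moreover have "exp (-v) * M * (1/2) \<le> exp (-v) * M * sum (Kprob (\<theta> * exp (\<theta> / n \<theta> * t)) (n \<theta>)) (B \<theta>)"
      using elim(1) M by (intro mult_left_mono) auto
    ultimately have lower: "exp (-v) * M * (1/2) \<le> sum (Kprob \<theta> (n \<theta>)) (B \<theta>)"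
      by linarith
    have pos: "0 < exp (-v) * M * (1/2)" using M by simp
    have "ln (exp (-v) * M * (1/2)) = ln (exp (-v) * M) + ln (1/2)"
      using M by (intro ln_mult_pos) auto
    also have "ln (exp (-v) * M) = -v + ln M" using M by (simp add: ln_mult)
    finally have "ln (exp (-v) * M * (1/2)) / \<theta> = - (t * y + \<bar>t\<bar> * \<rho>) + ln M / \<theta> + ln (1/2) * inverse \<theta>"
      using \<theta> by (simp add: v_def field_simps)
    moreover have "ln (exp (-v) * M * (1/2)) / \<theta> \<le> ln (sum (Kprob \<theta> (n \<theta>)) (B \<theta>)) / \<theta>"
      using lower pos \<theta> by (simp add: divide_right_mono)
    ultimately show ?case using lower pos elim(2,3) unfolding M_def by argo
  qed
qed

lemma Legendre_value_le_Liminf: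
  assumes G: "open G" and y: "mean_fraction (c * exp (c * t)) \<in> G"
  shows "ereal (Lambda3 c t - t * mean_fraction (c * exp (c * t))) \<le> Liminf at_top (\<lambda>\<theta>. scaled_log_Klaw \<theta> G)"
proof (rule le_Liminf_if_eventually_ge)
  fix \<epsilon> :: real assume \<epsilon>: "\<epsilon> > 0"
  define y where "y = mean_fraction (c * exp (c * t))"
  obtain \<rho>0 where \<rho>0: "\<rho>0 > 0" "ball y \<rho>0 \<subseteq> G" using G y open_contains_ball unfolding y_def by blast
  define \<rho> where "\<rho> = min \<rho>0 (\<epsilon> / (2 * (\<bar>t\<bar> + 1)))"
  have "0 < \<epsilon> / (2 * (\<bar>t\<bar> + 1))" using \<epsilon> by (intro divide_pos_pos) auto
  then have \<rho>: "\<rho> > 0" unfolding \<rho>_def using \<rho>0 by simp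
  have "\<bar>t\<bar> * \<rho> \<le> (\<bar>t\<bar> + 1) * (\<epsilon> / (2 * (\<bar>t\<bar> + 1)))"
    unfolding \<rho>_def using \<open>0 < \<epsilon> / _\<close> \<rho>0 by (intro mult_mono) auto
  also have "\<dots> = \<epsilon> / 2"
    using abs_ge_zero[of t] by (simp add: field_simps)
  finally have t\<rho>: "\<bar>t\<bar> * \<rho> \<le> \<epsilon> / 2" .
  show "eventually (\<lambda>\<theta>. ereal (Lambda3 c t - t * y - \<epsilon>) \<le> scaled_log_Klaw \<theta> G) at_top"
    using eventually_ln_Kprob_near_mean_ge[OF \<rho> half_gt_zero[OF \<epsilon>], of t] eventually_gt_at_top[of 0]
  proof eventually_elim
    case (elim \<theta>)
    let ?B = "{k\<in>{1..n \<theta>}. \<bar>real k / n \<theta> - y\<bar> < \<rho>}"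
    have "?B \<subseteq> {k\<in>{1..n \<theta>}. real k / n \<theta> \<in> G}"
      using \<rho>0(2) by (auto simp: \<rho>_def dist_real_def abs_minus_commute)
    then have "sum (Kprob \<theta> (n \<theta>)) ?B \<le> Klaw \<theta> (n \<theta>) G"
      unfolding Klaw_def using Kprob_nonneg[OF elim(2)] by (intro sum_mono2) auto
    then have "0 < Klaw \<theta> (n \<theta>) G" "ln (sum (Kprob \<theta> (n \<theta>)) ?B) / \<theta> \<le> ln (Klaw \<theta> (n \<theta>) G) / \<theta>"
      using elim unfolding y_def by (auto simp: divide_right_mono)
    moreover have "Lambda3 c t - t * y - \<epsilon> \<le> ln (sum (Kprob \<theta> (n \<theta>)) ?B) / \<theta>"
      using elim(1) t\<rho> unfolding y_def by linarith
    ultimately show ?case by (simp add: eln_def)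
  qed
qed

lemma uminus_rateI_le_Liminf:
  assumes G: "open G" and x: "x \<in> G \<inter> {0..1}"
  shows "- rateI c x \<le> Liminf at_top (\<lambda>\<theta>. scaled_log_Klaw \<theta> G)"
proof (cases "rateI c x")
  case (real r)
  obtain y where y: "y \<in> G" "0 < y" "y < 1" "rateI c y \<le> ereal r"
    by (rule rateI_approx_by_interior[OF c_pos G]) (use x real in auto)
  obtain u where u: "u > 0" "mean_fraction u = y" using mean_fraction_surj[OF y(2,3)] .
  define t where "t = ln (u / c) / c"
  have u_eq: "c * exp (c * t) = u" unfolding t_def using c_pos u by simp
  have "ereal (t * y - Lambda3 c t) \<le> ereal r" using order_trans[OF rateI_ge y(4)] .
  then have "- rateI c x \<le> ereal (Lambda3 c t - t * mean_fraction (c * exp (c * t)))"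
    using real u u_eq by simp
  also have "\<dots> \<le> Liminf at_top (\<lambda>\<theta>. scaled_log_Klaw \<theta> G)"
    using u u_eq y by (intro Legendre_value_le_Liminf G) simp
  finally show ?thesis .
qed (use rateI_nonneg[OF c_pos, of x] in auto)

lemma lower_bound:
  assumes "open G"
  shows "- (INF x\<in>G \<inter> {0..1}. rateI c x) \<le> Liminf at_top (\<lambda>\<theta>. scaled_log_Klaw \<theta> G)"
proof -
  have "- Liminf at_top (\<lambda>\<theta>. scaled_log_Klaw \<theta> G) \<le> (INF x\<in>G \<inter> {0..1}. rateI c x)"
    using uminus_rateI_le_Liminf[OF assms] by (intro INF_greatest) (simp add: ereal_uminus_le_reorder)
  then show ?thesis by (simp add: ereal_uminus_le_reorder)
qed

lemma LDP: "LDP_01 (\<lambda>\<theta>. Klaw \<theta> (n \<theta>)) (rateI c)"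
  unfolding LDP_01_def
  using rateI_nonneg[OF c_pos] closed_rateI_sublevel upper_bound lower_bound by auto

end

theorem theorem4p4:
  fixes n :: "real \<Rightarrow> nat" and c :: real
  assumes "\<And>\<theta>. n \<theta> > 0"
    and "filterlim n at_top at_top"
    and "((\<lambda>\<theta>. \<theta> / real (n \<theta>)) \<longlongrightarrow> c) at_top"
    and "c > 0"
  shows "LDP_01 (\<lambda>\<theta>. Klaw \<theta> (n \<theta>)) (rateI c)"
proof -
  interpret ewens_ldp_regime n c by unfold_locales (use assms in auto)
  show ?thesis by (rule LDP)
qed

end
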